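(* Suppose $X$ is a polyhedron and let $\beta\in\mathcal{A}$. Let $P=-\mathcal{A}^TX+N_\beta^\circ$ (Minkowski sum). Then a vector $\nu\in N_\beta\setminus\{0\}$ is an $X$-circuit of $\mathcal{A}$ if and only if $\operatorname{cone}\{\nu\}=\{t\nu:t\ge0\}$ is a ray (one-dimensional cone) of the outer normal fan $\mathcal{O}(P)$. Consequently, when $X$ is polyhedral there are only finitely many normalized $X$-circuits of $\mathcal{A}$.
   Context: $X\subset\mathbb{R}^n$ is a nonempty closed convex set and $\mathcal{A}\subset\mathbb{R}^n$ is a nonempty finite set. $\mathbb{R}^{\mathcal{A}}$ denotes real vectors indexed by $\mathcal{A}$. $\mathcal{A}$ is viewed as the linear map $\mathbb{R}^{\mathcal{A}}\to\mathbb{R}^n$, $\mathcal{A}\nu=\sum_{\alpha\in\mathcal{A}}\alpha\nu_\alpha$, with adjoint $\mathcal{A}^T:\mathbb{R}^n\to\mathbb{R}^{\mathcal{A}}$, $(\mathcal{A}^Tx)_\alpha=\alpha^Tx$. The support function of a convex set $S$ is $\sigma_S(y)=\sup\{y^Tx:x\in S\}\in\mathbb{R}\cup\{+\infty\}$. For $\beta\in\mathcal{A}$, $N_\beta=\{\nu\in\mathbb{R}^{\mathcal{A}}:\nu_\alpha\ge0\ \forall\alpha\neq\beta,\ \sum_{\alpha}\nu_\alpha=0\}$, and $N_\beta^\circ=\{w:w^T\nu\le0\ \forall\nu\in N_\beta\}$ is its polar. A vector $\nu^\star\in N_\beta$ is an $X$-circuit of $\mathcal{A}$ if (1) $\nu^\star\neq0$,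 (2) $\sigma_X(-\mathcal{A}\nu^\star)<\infty$, and (3) $\nu^\star$ cannot be written as a convex combination of two non-proportional vectors $\nu^{(1)},\nu^{(2)}\in N_\beta$ such that the map $\nu\mapsto\sigma_X(-\mathcal{A}\nu)$ is affine on the segment $[\nu^{(1)},\nu^{(2)}]$. An $X$-circuit $\lambda\in N_\beta$ is normalized if $\lambda_\beta=-1$. For a polyhedron $P$ and a face $F$ of $P$, the outer normal cone is $\mathsf{N}_P(F)=\{w:z^Tw=\sigma_P(w)\ \forall z\in F\}$, and the outer normal fan is $\mathcal{O}(P)=\{\mathsf{N}_P(F):F\text{ a face of }P\}$. *)

theory Defs
  imports "HOL-Analysis.Analysis"
begin

text \<open>The finite set A is represented by an injective map a from a finite index type 'm
  into R^n; R^A is then real^'m.  The linear map A and its adjoint:\<close>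

definition Amap :: "('m::finite \<Rightarrow> real^'n) \<Rightarrow> real^'m \<Rightarrow> real^'n" where
  "Amap a \<nu> = (\<Sum>i\<in>UNIV. (\<nu> $ i) *\<^sub>R a i)"

definition Atrans :: "('m::finite \<Rightarrow> real^'n) \<Rightarrow> real^'n \<Rightarrow> real^'m" where
  "Atrans a x = (\<chi> i. a i \<bullet> x)"

definition supp_fun :: "'a::real_inner set \<Rightarrow> 'a \<Rightarrow> ereal" where
  "supp_fun S y = (SUP x\<in>S. ereal (y \<bullet> x))"

definition Ncone :: "'m::finite \<Rightarrow> (real^'m) set" where
  "Ncone b = {\<nu>. (\<forall>i. i \<noteq> b \<longrightarrow> 0 \<le> \<nu> $ i) \<and> (\<Sum>i\<in>UNIV. \<nu> $ i) = 0}"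

definition polar :: "'a::real_inner set \<Rightarrow> 'a set" where
  "polar C = {w. \<forall>\<nu>\<in>C. w \<bullet> \<nu> \<le> 0}"

definition proportional :: "'a::real_vector \<Rightarrow> 'a \<Rightarrow> bool" where
  "proportional u v \<longleftrightarrow> (\<exists>c. u = c *\<^sub>R v) \<or> (\<exists>c. v = c *\<^sub>R u)"

definition affine_on_segment :: "('a::real_vector \<Rightarrow> ereal) \<Rightarrow> 'a \<Rightarrow> 'a \<Rightarrow> bool" where
  "affine_on_segment g u v \<longleftrightarrow>
     (\<exists>c d::real. \<forall>s\<in>{0..1}. g ((1 - s) *\<^sub>R u + s *\<^sub>R v) = ereal (c + s * d))"

definition X_circuit ::
  "(real^'n) set \<Rightarrow> ('m::finite \<Rightarrow> real^'n) \<Rightarrow> 'm \<Rightarrow> real^'m \<Rightarrow> bool" where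
  "X_circuit X a b \<nu> \<longleftrightarrow>
     \<nu> \<in> Ncone b \<and> \<nu> \<noteq> 0 \<and>
     supp_fun X (- Amap a \<nu>) < \<infinity> \<and>
     \<not> (\<exists>\<nu>1 \<in> Ncone b. \<exists>\<nu>2 \<in> Ncone b. \<exists>t\<in>{0<..<1}.
            \<not> proportional \<nu>1 \<nu>2 \<and> \<nu> = (1 - t) *\<^sub>R \<nu>1 + t *\<^sub>R \<nu>2 \<and>
            affine_on_segment (\<lambda>\<mu>. supp_fun X (- Amap a \<mu>)) \<nu>1 \<nu>2)"

definition normal_cone_face :: "'a::real_inner set \<Rightarrow> 'a set \<Rightarrow> 'a set" where
  "normal_cone_face P F = {w. \<forall>z\<in>F. ereal (z \<bullet> w) = supp_fun P w}"

definition outer_normal_fan :: "'a::real_inner set \<Rightarrow> 'a set set" where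
  "outer_normal_fan P = {normal_cone_face P F | F. F face_of P}"

end

theory Submission
  imports Defs
begin

text \<open>For \<nu> in the cone N the support function of P = -A^T X + N\<degree> at \<nu> is \<sigma>_X(-A\<nu>), and it is
  infinite off N; the maximizers of \<nu> on P are the sums of the maximizers of -A\<nu> on X and of \<nu> on N\<degree>.
  If cone {\<nu>} is the normal cone of a face F of P, an affine piece of \<sigma>_X(-A\<mu>) on a segment through \<nu>
  puts both endpoints into the normal cone of F, hence on the ray of \<nu>: so \<nu> is a circuit.
  Conversely, let F be the face of maximizers of a circuit \<nu> and w a vector in its normal cone.
  Polyhedrality of X yields \<epsilon> > 0 and a single point z of X maximizing -A(\<nu> + kw) for all
  |k| \<le> \<epsilon>, so the support function is affine on [\<nu> - \<epsilon>w, \<nu> + \<epsilon>w] and the circuit property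
  forces w onto the ray of \<nu>.  Finiteness: a normalized circuit is determined by its face of P, which
  is the sum of a face of X and a face of the polyhedral cone N\<degree>.\<close>

section \<open>Maximizers and support functions\<close>

definition maximizers :: "'a::real_inner set \<Rightarrow> 'a \<Rightarrow> 'a set" where
  "maximizers S y = {x\<in>S. \<forall>x'\<in>S. y \<bullet> x' \<le> y \<bullet> x}"

lemma maximizers_subset: "maximizers S y \<subseteq> S"
  unfolding maximizers_def by blast

lemma maximizers_eq_hyperplane:
  assumes "z \<in> maximizers S y"
  shows "maximizers S y = S \<inter> {x. y \<bullet> x = y \<bullet> z}"
  using assms unfolding maximizers_def by (auto intro: antisym)

lemma maximizers_face_of:
  assumes "convex S"
  shows "maximizers S y face_of S"
proof (cases "maximizers S y = {}")
  case False
  then obtain z where z: "z \<in> maximizers S y" by blast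
  have "S \<inter> {x. y \<bullet> x = y \<bullet> z} face_of S"
    using assms z unfolding maximizers_def by (intro face_of_Int_supporting_hyperplane_le) auto
  then show ?thesis using maximizers_eq_hyperplane[OF z] by simp
qed simp

lemma maximizers_conic_combination:
  assumes "z \<in> maximizers S u" "z \<in> maximizers S v" "0 \<le> \<alpha>" "0 \<le> \<beta>"
  shows "z \<in> maximizers S (\<alpha> *\<^sub>R u + \<beta> *\<^sub>R v)"
  using assms unfolding maximizers_def
  by (auto simp: inner_add_left intro!: add_mono mult_left_mono)

lemma maximizers_finite_nonempty:
  assumes "finite V" "V \<noteq> {}"
  shows "maximizers V y \<noteq> {}"
proof -
  have fin: "finite ((\<lambda>v. y \<bullet> v) ` V)" "(\<lambda>v. y \<bullet> v) ` V \<noteq> {}" using assms by auto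
  obtain v where "v \<in> V" "y \<bullet> v = Max ((\<lambda>v. y \<bullet> v) ` V)" using Max_in[OF fin] by auto
  then have "v \<in> maximizers V y" using Max_ge[OF fin(1)] unfolding maximizers_def by auto
  then show ?thesis by blast
qed

lemma maximizers_scaleR:
  assumes "z \<in> maximizers S u" "0 \<le> t"
  shows "z \<in> maximizers S (t *\<^sub>R u)"
  using maximizers_conic_combination[OF assms(1,1) assms(2) order_refl] by simp

text \<open>For k < 0, y + k d is a convex combination of y and y - \<epsilon> d.\<close>
lemma maximizers_perturbation_interval:
  assumes y: "z \<in> maximizers S y" and d: "z \<in> maximizers S d"
    and y\<epsilon>: "z \<in> maximizers S (y - \<epsilon> *\<^sub>R d)" and "0 < \<epsilon>" "- \<epsilon> \<le> k"
  shows "z \<in> maximizers S (y + k *\<^sub>R d)"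
proof (cases "0 \<le> k")
  case True
  then show ?thesis using maximizers_conic_combination[OF y d, of 1 k] by simp
next
  case False
  have "y + k *\<^sub>R d = (1 + k / \<epsilon>) *\<^sub>R y + (- k / \<epsilon>) *\<^sub>R (y - \<epsilon> *\<^sub>R d)"
    using \<open>0 < \<epsilon>\<close> by (simp add: algebra_simps)
  moreover have "0 \<le> 1 + k / \<epsilon>" "0 \<le> - k / \<epsilon>"
    using False assms(4,5) by (simp_all add: field_simps)
  ultimately show ?thesis using maximizers_conic_combination[OF y y\<epsilon>] by metis
qed

lemma supp_fun_upper: "x \<in> S \<Longrightarrow> ereal (y \<bullet> x) \<le> supp_fun S y"
  unfolding supp_fun_def by (rule SUP_upper)

lemma maximizers_iff_supp_fun:
  "z \<in> maximizers S y \<longleftrightarrow> z \<in> S \<and> supp_fun S y = ereal (y \<bullet> z)"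
proof
  assume "z \<in> maximizers S y"
  then show "z \<in> S \<and> supp_fun S y = ereal (y \<bullet> z)"
    unfolding maximizers_def supp_fun_def
    by (auto intro!: antisym SUP_least SUP_upper2[of z])
next
  assume "z \<in> S \<and> supp_fun S y = ereal (y \<bullet> z)"
  then show "z \<in> maximizers S y"
    unfolding maximizers_def using supp_fun_upper[of _ S y] by force
qed

lemma normal_cone_face_iff_maximizers:
  assumes "F \<subseteq> S"
  shows "w \<in> normal_cone_face S F \<longleftrightarrow> F \<subseteq> maximizers S w"
  using assms unfolding normal_cone_face_def subset_iff maximizers_iff_supp_fun
  by (auto simp: inner_commute)

lemma supp_fun_finite_imp_bounded:
  assumes "S \<noteq> {}" "supp_fun S y < \<infinity>"
  shows "\<exists>m. \<forall>x\<in>S. y \<bullet> x \<le> m"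
proof -
  obtain x0 where "x0 \<in> S" using assms(1) by blast
  then have "supp_fun S y \<noteq> -\<infinity>" using supp_fun_upper[of x0 S y] by auto
  with assms(2) obtain m where "supp_fun S y = ereal m" by (cases "supp_fun S y") auto
  then show ?thesis using supp_fun_upper[of _ S y] by auto
qed

lemma supp_fun_unbounded_direction:
  assumes "p \<in> S" "\<And>t. 0 \<le> t \<Longrightarrow> p + t *\<^sub>R q \<in> S" "w \<bullet> q > 0"
  shows "supp_fun S w = \<infinity>"
  unfolding supp_fun_def top_ereal_def[symmetric] SUP_eq_top_iff
proof (intro allI impI)
  fix M :: ereal assume "M < top"
  then obtain m where m: "M \<le> ereal m" by (cases M) auto
  define t where "t = (\<bar>m - w \<bullet> p\<bar> + 1) / (w \<bullet> q)"
  have "0 \<le> t" unfolding t_def using assms(3) by simp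
  moreover have "w \<bullet> (p + t *\<^sub>R q) = w \<bullet> p + \<bar>m - w \<bullet> p\<bar> + 1"
    unfolding t_def using assms(3) by (simp add: inner_add_right)
  ultimately show "\<exists>x\<in>S. M < ereal (w \<bullet> x)"
    using assms(2) m by (intro bexI[of _ "p + t *\<^sub>R q"]) (auto intro: order.strict_trans1)
qed

lemma affine_on_segment_supp_fun_linear:
  assumes "linear g" and "\<And>s. s \<in> {0..1} \<Longrightarrow> z \<in> maximizers X (g ((1 - s) *\<^sub>R u + s *\<^sub>R v))"
  shows "affine_on_segment (\<lambda>\<mu>. supp_fun X (g \<mu>)) u v"
  unfolding affine_on_segment_def
proof (intro exI ballI)
  fix s :: real assume s: "s \<in> {0..1}"
  define \<mu> where "\<mu> = (1 - s) *\<^sub>R u + s *\<^sub>R v"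
  have lin: "g \<mu> = (1 - s) *\<^sub>R g u + s *\<^sub>R g v"
    unfolding \<mu>_def by (simp only: linear_add[OF assms(1)] linear_scale[OF assms(1)])
  have "supp_fun X (g \<mu>) = ereal (g \<mu> \<bullet> z)"
    using assms(2)[OF s] maximizers_iff_supp_fun unfolding \<mu>_def by blast
  also have "\<dots> = ereal (g u \<bullet> z + s * ((g v - g u) \<bullet> z))"
    unfolding lin by (simp add: inner_add_left inner_diff_left algebra_simps)
  finally show "supp_fun X (g ((1 - s) *\<^sub>R u + s *\<^sub>R v)) = ereal (g u \<bullet> z + s * ((g v - g u) \<bullet> z))"
    unfolding \<mu>_def .
qed

text \<open>The defects of z at the two endpoints are nonnegative and average to zero.\<close>
lemma maximizers_affine_segment:
  assumes "affine_on_segment (supp_fun S) u v" "t \<in> {0<..<1}"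
    and z: "z \<in> maximizers S ((1 - t) *\<^sub>R u + t *\<^sub>R v)"
  shows "z \<in> maximizers S u \<and> z \<in> maximizers S v"
proof -
  obtain c d where cd: "\<And>s. s \<in> {0..1} \<Longrightarrow> supp_fun S ((1 - s) *\<^sub>R u + s *\<^sub>R v) = ereal (c + s * d)"
    using assms(1) unfolding affine_on_segment_def by blast
  have zS: "z \<in> S" using z maximizers_subset by blast
  have su: "supp_fun S u = ereal c" and sv: "supp_fun S v = ereal (c + d)"
    using cd[of 0] cd[of 1] by simp_all
  have "ereal (u \<bullet> z) \<le> ereal c" "ereal (v \<bullet> z) \<le> ereal (c + d)"
    using supp_fun_upper[OF zS, of u] supp_fun_upper[OF zS, of v] su sv by simp_all
  then have le: "u \<bullet> z \<le> c" "v \<bullet> z \<le> c + d" by simp_all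
  have "((1 - t) *\<^sub>R u + t *\<^sub>R v) \<bullet> z = c + t * d"
    using z cd[of t] assms(2) unfolding maximizers_iff_supp_fun by simp
  then have "(1 - t) * (c - u \<bullet> z) + t * ((c + d) - v \<bullet> z) = 0"
    by (simp add: algebra_simps)
  moreover have "(1 - t) * (c - u \<bullet> z) \<ge> 0" "t * ((c + d) - v \<bullet> z) \<ge> 0"
    using assms(2) le by simp_all
  ultimately have "u \<bullet> z = c" "v \<bullet> z = c + d"
    using assms(2) by (auto simp: add_nonneg_eq_0_iff)
  then show ?thesis using zS su sv unfolding maximizers_iff_supp_fun by simp
qed

section \<open>Polyhedra\<close>

lemma eventually_nonpos_perturbation:
  fixes A B :: real
  assumes "A \<le> 0" and "A = 0 \<Longrightarrow> 0 \<le> B"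
  shows "\<forall>\<^sub>F \<epsilon> in at_right 0. A - \<epsilon> * B \<le> 0"
proof (cases "A = 0")
  case True
  then show ?thesis
    using assms(2) eventually_at_right_less[of 0] by (auto elim!: eventually_mono)
next
  case False
  with assms(1) have "A < 0" by simp
  have "((\<lambda>\<epsilon>. A - \<epsilon> * B) \<longlongrightarrow> A) (at_right 0)"
    by (intro tendsto_eq_intros) auto
  then have "\<forall>\<^sub>F \<epsilon> in at_right 0. A - \<epsilon> * B < 0"
    using \<open>A < 0\<close> by (rule order_tendstoD(2))
  then show ?thesis by (rule eventually_mono) simp
qed

lemma convex_cone_hull_subset_halfspace:
  "convex_cone hull W \<subseteq> {p. c \<bullet> p \<le> 0} \<longleftrightarrow> (\<forall>w\<in>W. c \<bullet> w \<le> 0)"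
proof
  show "convex_cone hull W \<subseteq> {p. c \<bullet> p \<le> 0} \<Longrightarrow> \<forall>w\<in>W. c \<bullet> w \<le> 0"
    using hull_inc[of _ W convex_cone] by blast
  show "\<forall>w\<in>W. c \<bullet> w \<le> 0 \<Longrightarrow> convex_cone hull W \<subseteq> {p. c \<bullet> p \<le> 0}"
    by (intro hull_minimal convex_cone_halfspace_le) auto
qed

lemma linear_bounded_on_ray_imp_nonpos:
  fixes x r :: "'a::real_inner"
  assumes "\<And>t. 0 \<le> t \<Longrightarrow> c \<bullet> (x + t *\<^sub>R r) \<le> m"
  shows "c \<bullet> r \<le> 0"
proof (rule ccontr)
  assume "\<not> c \<bullet> r \<le> 0"
  then have pos: "c \<bullet> r > 0" by simp
  define t where "t = (\<bar>m - c \<bullet> x\<bar> + 1) / (c \<bullet> r)"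
  have "0 \<le> t" unfolding t_def using pos by simp
  moreover have "c \<bullet> (x + t *\<^sub>R r) = c \<bullet> x + \<bar>m - c \<bullet> x\<bar> + 1"
    unfolding t_def using pos by (simp add: inner_add_right)
  ultimately have "c \<bullet> x + \<bar>m - c \<bullet> x\<bar> + 1 \<le> m" using assms by metis
  then show False by arith
qed

lemma closed_convex_cone_separation:
  fixes C :: "'a::euclidean_space set"
  assumes "closed C" "convex_cone C" "v \<notin> C"
  obtains z where "z \<in> polar C" "z \<bullet> v > 0"
proof -
  obtain c e where ce: "c \<bullet> v < e" "\<And>x. x \<in> C \<Longrightarrow> e < c \<bullet> x"
    using separating_hyperplane_closed_point assms convex_cone_def by metis
  have "e < 0" using ce(2) convex_cone_contains_0[OF assms(2)] by force
  have "0 \<le> c \<bullet> x" if x: "x \<in> C" for x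
  proof (rule ccontr)
    assume "\<not> 0 \<le> c \<bullet> x"
    then have "(e / (c \<bullet> x)) *\<^sub>R x \<in> C" and "c \<bullet> ((e / (c \<bullet> x)) *\<^sub>R x) = e"
      using \<open>e < 0\<close> x convex_cone_scaleR[OF assms(2)] by (auto simp: divide_nonpos_neg)
    then show False using ce(2) by force
  qed
  then show ?thesis using that[of "- c"] ce(1) \<open>e < 0\<close> unfolding polar_def by auto
qed

lemma polyhedron_inequalities:
  fixes S :: "'a::euclidean_space set"
  assumes "polyhedron S"
  obtains H where "finite H" "S = {x. \<forall>(c, d)\<in>H. c \<bullet> x \<le> d}"
proof -
  obtain F a b where "finite F" "S = \<Inter> F"
    and ab: "\<And>h. h \<in> F \<Longrightarrow> h = {x. a h \<bullet> x \<le> b h}"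
    using assms unfolding polyhedron_def by metis
  have "x \<in> h \<longleftrightarrow> a h \<bullet> x \<le> b h" if "h \<in> F" for x h
    using ab[OF that] by (metis mem_Collect_eq)
  then have "S = {x. \<forall>(c, d)\<in>(\<lambda>h. (a h, b h)) ` F. c \<bullet> x \<le> d}"
    using \<open>S = \<Inter> F\<close> by auto
  then show ?thesis using that \<open>finite F\<close> by blast
qed

lemma polar_finite_eq_convex_cone_hull:
  fixes G :: "'a::euclidean_space set"
  assumes "finite G"
  obtains R where "finite R" "polar G = convex_cone hull R"
proof -
  let ?K = "convex_cone hull G"
  obtain H where "finite H" and H: "?K = {x. \<forall>(c, d)\<in>H. c \<bullet> x \<le> d}"
    using polyhedron_inequalities[OF polyhedron_convex_cone_hull[OF assms]] by blast
  have K: "?K = {u. \<forall>c\<in>fst ` H. c \<bullet> u \<le> 0}"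
  proof (intro equalityI subsetI CollectI ballI)
    fix u c assume u: "u \<in> ?K" and "c \<in> fst ` H"
    then obtain d where cd: "(c, d) \<in> H" by force
    have "c \<bullet> (0 + t *\<^sub>R u) \<le> d" if "0 \<le> t" for t
    proof -
      have "t *\<^sub>R u \<in> ?K" by (rule convex_cone_hull_mul[OF u that])
      then show ?thesis using H cd by auto
    qed
    then show "c \<bullet> u \<le> 0" by (rule linear_bounded_on_ray_imp_nonpos)
  next
    fix u assume u: "u \<in> {u. \<forall>c\<in>fst ` H. c \<bullet> u \<le> 0}"
    have "c \<bullet> u \<le> d" if cd: "(c, d) \<in> H" for c d
    proof -
      have "0 \<in> ?K" by (rule convex_cone_hull_contains_0)
      then have "0 \<le> d" using H cd by auto
      moreover have "c \<bullet> u \<le> 0" using u cd by force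
      ultimately show ?thesis by simp
    qed
    then show "u \<in> ?K" unfolding H by auto
  qed
  have "polar G = convex_cone hull (fst ` H)"
  proof
    have "polar G = (\<Inter>g\<in>G. {v. g \<bullet> v \<le> 0})"
      unfolding polar_def by (auto simp: inner_commute)
    then have "convex_cone (polar G)"
      by (auto intro!: convex_cone_Inter convex_cone_halfspace_le)
    moreover have "fst ` H \<subseteq> polar G"
      using K hull_inc[of _ G] unfolding polar_def by blast
    ultimately show "convex_cone hull (fst ` H) \<subseteq> polar G" by (rule hull_minimal[rotated])
  next
    show "polar G \<subseteq> convex_cone hull (fst ` H)"
    proof
      fix v assume v: "v \<in> polar G"
      show "v \<in> convex_cone hull (fst ` H)"
      proof (rule ccontr)
        assume "v \<notin> convex_cone hull (fst ` H)"
        then obtain z where z: "z \<in> polar (convex_cone hull (fst ` H))" "z \<bullet> v > 0"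
          using closed_convex_cone_separation[OF closed_convex_cone_hull convex_cone_convex_cone_hull]
            \<open>finite H\<close> by blast
        have "c \<bullet> z \<le> 0" if "c \<in> fst ` H" for c
          using z(1) hull_inc[OF that] unfolding polar_def by (simp add: inner_commute)
        then have "z \<in> ?K" unfolding K by blast
        moreover have "\<forall>g\<in>G. v \<bullet> g \<le> 0" using v unfolding polar_def by blast
        then have "?K \<subseteq> {u. v \<bullet> u \<le> 0}"
          by (simp add: convex_cone_hull_subset_halfspace)
        ultimately show False using z(2) by (auto simp: inner_commute)
      qed
    qed
  qed
  then show ?thesis using that \<open>finite H\<close> by blast
qed

lemma polyhedron_homogenization:
  fixes X :: "'a::euclidean_space set"
  assumes "polyhedron X"
  obtains W :: "('a \<times> real) set" where "finite W"
    "\<And>x. x \<in> X \<longleftrightarrow> (x, 1) \<in> convex_cone hull W"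
    "\<And>w. w \<in> W \<Longrightarrow> 0 \<le> snd w"
    "\<And>w. w \<in> W \<Longrightarrow> 0 < snd w \<Longrightarrow> (1 / snd w) *\<^sub>R fst w \<in> X"
    "\<And>w x t. w \<in> W \<Longrightarrow> snd w = 0 \<Longrightarrow> x \<in> X \<Longrightarrow> 0 \<le> t \<Longrightarrow> x + t *\<^sub>R fst w \<in> X"
proof -
  obtain H where "finite H" and X: "X = {x. \<forall>(c, d)\<in>H. c \<bullet> x \<le> d}"
    using polyhedron_inequalities[OF assms] by blast
  define G where "G = (\<lambda>(c, d). (c, - d)) ` H \<union> {(0, -1)}"
  obtain W where "finite W" and W: "polar G = convex_cone hull W"
    using polar_finite_eq_convex_cone_hull[of G] \<open>finite H\<close> unfolding G_def by blast
  have polar_G: "polar G = {(x, t). 0 \<le> t \<and> (\<forall>(c, d)\<in>H. c \<bullet> x \<le> d * t)}"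
    unfolding polar_def G_def by (auto simp: inner_commute mult.commute split_beta)
  have gen: "0 \<le> snd w" "\<And>c d. (c, d) \<in> H \<Longrightarrow> c \<bullet> fst w \<le> d * snd w" if "w \<in> W" for w
    using hull_inc[OF that, of convex_cone] unfolding W[symmetric] polar_G by (auto simp: split_beta)
  show ?thesis
  proof (rule that[OF \<open>finite W\<close>])
    show "x \<in> X \<longleftrightarrow> (x, 1) \<in> convex_cone hull W" for x
      unfolding X W[symmetric] polar_G by simp
    show "0 \<le> snd w" if "w \<in> W" for w
      using gen(1)[OF that] .
  next
    fix w assume w: "w \<in> W" "0 < snd w"
    have "c \<bullet> ((1 / snd w) *\<^sub>R fst w) \<le> d" if "(c, d) \<in> H" for c d
      using gen(2)[OF w(1) that] w(2) by (simp add: divide_le_eq mult.commute)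
    then show "(1 / snd w) *\<^sub>R fst w \<in> X" unfolding X by auto
  next
    fix w x and t :: real assume w: "w \<in> W" "snd w = 0" and x: "x \<in> X" and t: "0 \<le> t"
    have "c \<bullet> (x + t *\<^sub>R fst w) \<le> d" if cd: "(c, d) \<in> H" for c d
    proof -
      have "t * (c \<bullet> fst w) \<le> 0" using gen(2)[OF w(1) cd] w(2) t by (simp add: mult_nonneg_nonpos)
      moreover have "c \<bullet> x \<le> d" using x cd unfolding X by auto
      ultimately show ?thesis by (simp add: inner_add_right)
    qed
    then show "x + t *\<^sub>R fst w \<in> X" unfolding X by auto
  qed
qed

text \<open>A weak form of the Minkowski decomposition X = conv V + cone R.\<close>
lemma polyhedron_finite_generators:
  fixes X :: "'a::euclidean_space set"
  assumes "polyhedron X" "X \<noteq> {}"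
  obtains V R where "finite V" "V \<noteq> {}" "V \<subseteq> X" "finite R"
    "\<And>x r t. x \<in> X \<Longrightarrow> r \<in> R \<Longrightarrow> 0 \<le> t \<Longrightarrow> x + t *\<^sub>R r \<in> X"
    "\<And>y x. (\<forall>r\<in>R. y \<bullet> r \<le> 0) \<Longrightarrow> x \<in> X \<Longrightarrow> \<exists>v\<in>V. y \<bullet> x \<le> y \<bullet> v"
proof -
  obtain W where "finite W" and X: "\<And>x. x \<in> X \<longleftrightarrow> (x, 1) \<in> convex_cone hull W"
    and W0: "\<And>w. w \<in> W \<Longrightarrow> 0 \<le> snd w"
    and Wpos: "\<And>w. w \<in> W \<Longrightarrow> 0 < snd w \<Longrightarrow> (1 / snd w) *\<^sub>R fst w \<in> X"
    and Wrec: "\<And>w x t. w \<in> W \<Longrightarrow> snd w = 0 \<Longrightarrow> x \<in> X \<Longrightarrow> 0 \<le> t \<Longrightarrow> x + t *\<^sub>R fst w \<in> X"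
    using polyhedron_homogenization[OF assms(1)] by blast
  define V where "V = (\<lambda>w. (1 / snd w) *\<^sub>R fst w) ` {w\<in>W. 0 < snd w}"
  define R where "R = fst ` {w\<in>W. snd w = 0}"
  have "finite V" "finite R" "V \<subseteq> X" using \<open>finite W\<close> Wpos unfolding V_def R_def by auto
  moreover have "V \<noteq> {}"
  proof
    assume "V = {}"
    then have height: "\<not> 0 < snd w" if "w \<in> W" for w
      using that unfolding V_def by blast
    have "((0::'a), 1::real) \<bullet> w \<le> 0" if "w \<in> W" for w
      using height[OF that] by (simp add: inner_prod_def)
    then have "convex_cone hull W \<subseteq> {p. ((0::'a), 1::real) \<bullet> p \<le> 0}"
      using convex_cone_hull_subset_halfspace by blast
    moreover obtain x where "(x, 1) \<in> convex_cone hull W" using X assms(2) by blast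
    ultimately show False by auto
  qed
  moreover have "\<exists>v\<in>V. y \<bullet> x \<le> y \<bullet> v" if R: "\<forall>r\<in>R. y \<bullet> r \<le> 0" and x: "x \<in> X" for y x
  proof -
    obtain v where v: "v \<in> maximizers V y"
      using maximizers_finite_nonempty[OF \<open>finite V\<close> \<open>V \<noteq> {}\<close>] by blast
    have "(y, - (y \<bullet> v)) \<bullet> w \<le> 0" if w: "w \<in> W" for w
    proof (cases "snd w = 0")
      case True
      then have "fst w \<in> R" using w unfolding R_def by blast
      then show ?thesis using R True by (simp add: inner_prod_def)
    next
      case False
      then have pos: "0 < snd w" using W0[OF w] by simp
      then have "(1 / snd w) *\<^sub>R fst w \<in> V" using w unfolding V_def by blast
      then have "y \<bullet> ((1 / snd w) *\<^sub>R fst w) \<le> y \<bullet> v" using v unfolding maximizers_def by blast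
      then show ?thesis using pos by (simp add: inner_prod_def divide_le_eq mult.commute)
    qed
    then have "(y, - (y \<bullet> v)) \<bullet> (x, 1) \<le> 0"
      using convex_cone_hull_subset_halfspace X x by blast
    then show ?thesis using v maximizers_subset by auto
  qed
  ultimately show ?thesis using that Wrec unfolding R_def by blast
qed

lemma polyhedron_maximizer_exists:
  fixes X :: "'a::euclidean_space set"
  assumes "polyhedron X" "X \<noteq> {}" and bdd: "\<forall>x\<in>X. y \<bullet> x \<le> m"
  obtains z where "z \<in> maximizers X y"
proof -
  obtain V R where V: "finite V" "V \<noteq> {}" "V \<subseteq> X" "finite R"
    and rec: "\<And>x r t. x \<in> X \<Longrightarrow> r \<in> R \<Longrightarrow> 0 \<le> t \<Longrightarrow> x + t *\<^sub>R r \<in> X"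
    and gen: "\<And>y x. (\<forall>r\<in>R. y \<bullet> r \<le> 0) \<Longrightarrow> x \<in> X \<Longrightarrow> \<exists>v\<in>V. y \<bullet> x \<le> y \<bullet> v"
    by (rule polyhedron_finite_generators[OF assms(1,2)]) blast
  obtain x0 where x0: "x0 \<in> X" using assms(2) by blast
  have R: "\<forall>r\<in>R. y \<bullet> r \<le> 0"
  proof
    fix r assume "r \<in> R"
    then have "y \<bullet> (x0 + t *\<^sub>R r) \<le> m" if "0 \<le> t" for t
      using bdd rec[OF x0 _ that] by blast
    then show "y \<bullet> r \<le> 0" by (rule linear_bounded_on_ray_imp_nonpos)
  qed
  obtain v where v: "v \<in> maximizers V y" using maximizers_finite_nonempty[OF V(1,2)] by blast
  have "v \<in> X" using v V(3) maximizers_subset by blast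
  moreover have "y \<bullet> x \<le> y \<bullet> v" if x: "x \<in> X" for x
  proof -
    obtain v' where "v' \<in> V" "y \<bullet> x \<le> y \<bullet> v'" using gen[OF R x] by blast
    moreover have "y \<bullet> v' \<le> y \<bullet> v" using v \<open>v' \<in> V\<close> unfolding maximizers_def by blast
    ultimately show ?thesis by linarith
  qed
  ultimately have "v \<in> maximizers X y" unfolding maximizers_def by blast
  then show ?thesis by (rule that)
qed

text \<open>This is where polyhedrality is used: only the finitely many points of V and directions of R
  have to be checked.\<close>
lemma polyhedron_eventually_maximizer:
  fixes X :: "'a::euclidean_space set"
  assumes "polyhedron X" and z: "z \<in> maximizers X y"
    and d: "\<And>x. x \<in> maximizers X y \<Longrightarrow> d \<bullet> z \<le> d \<bullet> x"
  shows "\<forall>\<^sub>F \<epsilon> in at_right 0. z \<in> maximizers X (y - \<epsilon> *\<^sub>R d)"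
proof -
  have zX: "z \<in> X" and zmax: "\<And>x. x \<in> X \<Longrightarrow> y \<bullet> x \<le> y \<bullet> z"
    using z unfolding maximizers_def by blast+
  obtain V R where V: "finite V" "V \<noteq> {}" "V \<subseteq> X" "finite R"
    and rec: "\<And>x r t. x \<in> X \<Longrightarrow> r \<in> R \<Longrightarrow> 0 \<le> t \<Longrightarrow> x + t *\<^sub>R r \<in> X"
    and gen: "\<And>y x. (\<forall>r\<in>R. y \<bullet> r \<le> 0) \<Longrightarrow> x \<in> X \<Longrightarrow> \<exists>v\<in>V. y \<bullet> x \<le> y \<bullet> v"
    using zX by (metis empty_iff polyhedron_finite_generators[OF assms(1)])
  have "\<forall>\<^sub>F \<epsilon> in at_right 0. y \<bullet> r - \<epsilon> * (d \<bullet> r) \<le> 0" if r: "r \<in> R" for r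
  proof (rule eventually_nonpos_perturbation)
    have "y \<bullet> (z + t *\<^sub>R r) \<le> y \<bullet> z" if "0 \<le> t" for t
      using zmax rec[OF zX r that] by blast
    then show "y \<bullet> r \<le> 0" by (rule linear_bounded_on_ray_imp_nonpos)
    assume "y \<bullet> r = 0"
    then have "z + r \<in> maximizers X y"
      using rec[OF zX r, of 1] zmax unfolding maximizers_def by (simp add: inner_add_right)
    then have "d \<bullet> z \<le> d \<bullet> (z + r)" by (rule d)
    then show "0 \<le> d \<bullet> r" by (simp add: inner_add_right)
  qed
  moreover have "\<forall>\<^sub>F \<epsilon> in at_right 0. (y \<bullet> v - y \<bullet> z) - \<epsilon> * (d \<bullet> v - d \<bullet> z) \<le> 0"
    if v: "v \<in> V" for v
  proof (rule eventually_nonpos_perturbation)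
    show "y \<bullet> v - y \<bullet> z \<le> 0" using zmax v V(3) by force
    assume "y \<bullet> v - y \<bullet> z = 0"
    then have "v \<in> maximizers X y" using zmax v V(3) unfolding maximizers_def by force
    then have "d \<bullet> z \<le> d \<bullet> v" by (rule d)
    then show "0 \<le> d \<bullet> v - d \<bullet> z" by simp
  qed
  ultimately have "\<forall>\<^sub>F \<epsilon> in at_right 0. (\<forall>r\<in>R. y \<bullet> r - \<epsilon> * (d \<bullet> r) \<le> 0) \<and>
      (\<forall>v\<in>V. (y \<bullet> v - y \<bullet> z) - \<epsilon> * (d \<bullet> v - d \<bullet> z) \<le> 0)"
    using V(1,4) by (simp add: eventually_ball_finite eventually_conj)
  then show ?thesis
  proof (rule eventually_mono, elim conjE)
    fix \<epsilon> :: real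
    assume "\<forall>r\<in>R. y \<bullet> r - \<epsilon> * (d \<bullet> r) \<le> 0"
      and Vle: "\<forall>v\<in>V. (y \<bullet> v - y \<bullet> z) - \<epsilon> * (d \<bullet> v - d \<bullet> z) \<le> 0"
    then have R: "\<forall>r\<in>R. (y - \<epsilon> *\<^sub>R d) \<bullet> r \<le> 0" by (simp add: inner_diff_left)
    have "(y - \<epsilon> *\<^sub>R d) \<bullet> x \<le> (y - \<epsilon> *\<^sub>R d) \<bullet> z" if x: "x \<in> X" for x
    proof -
      obtain v where "v \<in> V" "(y - \<epsilon> *\<^sub>R d) \<bullet> x \<le> (y - \<epsilon> *\<^sub>R d) \<bullet> v"
        using gen[OF R x] by blast
      moreover have "(y - \<epsilon> *\<^sub>R d) \<bullet> v \<le> (y - \<epsilon> *\<^sub>R d) \<bullet> z"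
        using Vle \<open>v \<in> V\<close> by (simp add: inner_diff_left algebra_simps)
      ultimately show ?thesis by linarith
    qed
    then show "z \<in> maximizers X (y - \<epsilon> *\<^sub>R d)"
      using zX unfolding maximizers_def by blast
  qed
qed

section \<open>The map A, the cone N and its polar\<close>

lemma inner_Atrans: "w \<bullet> Atrans a x = Amap a w \<bullet> x"
proof -
  have "w \<bullet> Atrans a x = (\<Sum>i\<in>UNIV. w $ i * (a i \<bullet> x))"
    unfolding Atrans_def by (simp add: inner_vec_def[of w])
  also have "\<dots> = Amap a w \<bullet> x"
    by (simp add: Amap_def inner_sum_left)
  finally show ?thesis .
qed

lemma linear_Amap: "linear (Amap a)"
  by (rule linearI) (simp_all add: Amap_def scaleR_add_left sum.distrib scaleR_sum_right)

lemma linear_neg_Amap: "linear (\<lambda>\<mu>. - Amap a \<mu>)"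
  by (rule linearI) (simp_all add: linear_add[OF linear_Amap] linear_scale[OF linear_Amap])

lemma linear_neg_Atrans: "linear (\<lambda>x. - Atrans a x)"
  by (rule linearI) (simp_all add: Atrans_def vec_eq_iff inner_add_right)

lemma Ncone_add: "u \<in> Ncone b \<Longrightarrow> v \<in> Ncone b \<Longrightarrow> u + v \<in> Ncone b"
  unfolding Ncone_def by (simp add: sum.distrib)

lemma Ncone_scaleR: "u \<in> Ncone b \<Longrightarrow> 0 \<le> c \<Longrightarrow> c *\<^sub>R u \<in> Ncone b"
  unfolding Ncone_def by (simp add: sum_distrib_left[symmetric])

lemma Ncone_pointed:
  assumes "u \<in> Ncone b" "k *\<^sub>R u \<in> Ncone b" "k < 0"
  shows "u = 0"
proof -
  have "u $ i = 0" if "i \<noteq> b" for i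
    using assms that unfolding Ncone_def by (auto simp: zero_le_mult_iff intro: antisym)
  then have "(\<Sum>i\<in>UNIV. u $ i) = u $ b"
    by (subst sum.remove[of UNIV b]) auto
  then have "u $ b = 0" using assms(1) unfolding Ncone_def by simp
  with \<open>\<And>i. i \<noteq> b \<Longrightarrow> u $ i = 0\<close> show ?thesis by (metis vec_eq_iff zero_index)
qed

lemma eventually_Ncone_diff:
  assumes "\<nu> \<in> Ncone b" "w \<in> Ncone b" and supp: "\<And>i. i \<noteq> b \<Longrightarrow> \<nu> $ i = 0 \<Longrightarrow> w $ i = 0"
  shows "\<forall>\<^sub>F \<epsilon> in at_right 0. \<nu> - \<epsilon> *\<^sub>R w \<in> Ncone b"
proof -
  have "\<forall>\<^sub>F \<epsilon> in at_right 0. \<forall>i\<in>{i. i \<noteq> b}. - \<nu> $ i - \<epsilon> * (- w $ i) \<le> 0"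
    unfolding eventually_ball_finite_distrib[OF finite]
  proof
    fix i assume "i \<in> {i. i \<noteq> b}"
    then show "\<forall>\<^sub>F \<epsilon> in at_right 0. - \<nu> $ i - \<epsilon> * (- w $ i) \<le> 0"
      using assms(1) supp by (intro eventually_nonpos_perturbation) (auto simp: Ncone_def)
  qed
  then show ?thesis
  proof (rule eventually_mono)
    fix \<epsilon> :: real assume "\<forall>i\<in>{i. i \<noteq> b}. - \<nu> $ i - \<epsilon> * (- w $ i) \<le> 0"
    then show "\<nu> - \<epsilon> *\<^sub>R w \<in> Ncone b"
      using assms(1,2) unfolding Ncone_def by (auto simp: sum_subtractf sum_distrib_left[symmetric])
  qed
qed

lemma polar_Ncone:
  "polar (Ncone b) = {q :: real^'m::finite. \<forall>i. i \<noteq> b \<longrightarrow> q $ i \<le> q $ b}"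
proof (intro equalityI subsetI)
  fix q :: "real^'m" assume q: "q \<in> polar (Ncone b)"
  have "q $ i \<le> q $ b" if i: "i \<noteq> b" for i
  proof -
    have "axis i 1 - axis b 1 \<in> Ncone b"
      using i unfolding Ncone_def by (auto simp: axis_def sum_subtractf)
    then have "q \<bullet> (axis i 1 - axis b 1) \<le> 0" using q unfolding polar_def by blast
    then show ?thesis by (simp add: inner_diff_right inner_axis)
  qed
  then show "q \<in> {q. \<forall>i. i \<noteq> b \<longrightarrow> q $ i \<le> q $ b}" by blast
next
  fix q :: "real^'m" assume "q \<in> {q. \<forall>i. i \<noteq> b \<longrightarrow> q $ i \<le> q $ b}"
  then have q: "\<And>i. i \<noteq> b \<Longrightarrow> q $ i \<le> q $ b" by blast
  have "q \<bullet> \<nu> \<le> 0" if \<nu>: "\<nu> \<in> Ncone b" for \<nu>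
  proof -
    have "q \<bullet> \<nu> = (\<Sum>i\<in>UNIV. (q $ i - q $ b) * \<nu> $ i) + q $ b * (\<Sum>i\<in>UNIV. \<nu> $ i)"
      by (simp add: inner_vec_def algebra_simps sum.distrib sum_distrib_left sum_subtractf)
    also have "\<dots> \<le> 0"
    proof -
      have "(q $ i - q $ b) * \<nu> $ i \<le> 0" for i
        using q \<nu> unfolding Ncone_def by (cases "i = b") (auto intro: mult_nonpos_nonneg)
      then show ?thesis using \<nu> unfolding Ncone_def by (simp add: sum_nonpos)
    qed
    finally show ?thesis .
  qed
  then show "q \<in> polar (Ncone b)" unfolding polar_def by blast
qed

lemma polyhedron_polar_Ncone: "polyhedron (polar (Ncone (b::'m::finite)))"
proof -
  have "polar (Ncone b) = (\<Inter>i\<in>{i. i \<noteq> b}. {q :: real^'m. (axis i 1 - axis b 1) \<bullet> q \<le> 0})"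
    unfolding polar_Ncone by (auto simp: inner_diff_left inner_axis')
  then show ?thesis by (auto intro: polyhedron_halfspace_le)
qed

lemma convex_polar: "convex (polar C)"
  unfolding polar_def convex_def
  by (auto simp: inner_add_left intro!: add_nonpos_nonpos mult_nonneg_nonpos)

lemma polar_scaleR: "q \<in> polar C \<Longrightarrow> 0 \<le> t \<Longrightarrow> t *\<^sub>R q \<in> polar C"
  unfolding polar_def by (auto intro: mult_nonneg_nonpos)

lemma neg_axis_in_polar_Ncone: "i \<noteq> b \<Longrightarrow> - axis i 1 \<in> polar (Ncone b)"
  unfolding polar_def Ncone_def by (auto simp: inner_axis')

lemma notin_Ncone_polar_witness:
  assumes "w \<notin> Ncone b"
  obtains q where "q \<in> polar (Ncone b)" "w \<bullet> q > 0"
proof (cases "\<forall>i. i \<noteq> b \<longrightarrow> 0 \<le> w $ i")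
  case True
  define c where "c = (\<Sum>i\<in>UNIV. w $ i)"
  have "c \<noteq> 0" using True assms unfolding Ncone_def c_def by blast
  have "(\<chi> i. c) \<in> polar (Ncone b)"
    unfolding polar_Ncone by simp
  moreover have "w \<bullet> (\<chi> i. c) = c * c"
    by (simp add: inner_vec_def c_def sum_distrib_right mult.commute)
  ultimately show ?thesis using that \<open>c \<noteq> 0\<close> by (metis not_real_square_gt_zero)
next
  case False
  then obtain i where i: "i \<noteq> b" "w $ i < 0" by force
  then show ?thesis using that[OF neg_axis_in_polar_Ncone[OF i(1)]] by (simp add: inner_axis)
qed

lemma zero_in_polar: "0 \<in> polar C"
  unfolding polar_def by simp

lemma maximizers_polar_Ncone:
  assumes "w \<in> Ncone b"
  shows "maximizers (polar (Ncone b)) w = polar (Ncone b) \<inter> {q. w \<bullet> q = 0}"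
proof -
  have "0 \<in> maximizers (polar (Ncone b)) w"
    using assms unfolding maximizers_def polar_def by (auto simp: inner_commute)
  from maximizers_eq_hyperplane[OF this] show ?thesis by simp
qed

section \<open>The polyhedron P\<close>

definition circuit_polyhedron :: "(real^'n) set \<Rightarrow> ('m::finite \<Rightarrow> real^'n) \<Rightarrow> 'm \<Rightarrow> (real^'m) set" where
  "circuit_polyhedron X a b = {p + q | p q. p \<in> (\<lambda>x. - Atrans a x) ` X \<and> q \<in> polar (Ncone b)}"

lemma circuit_polyhedron_memI:
  "x \<in> X \<Longrightarrow> q \<in> polar (Ncone b) \<Longrightarrow> - Atrans a x + q \<in> circuit_polyhedron X a b"
  unfolding circuit_polyhedron_def by blast

lemma circuit_polyhedron_memE:
  assumes "p \<in> circuit_polyhedron X a b"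
  obtains x q where "x \<in> X" "q \<in> polar (Ncone b)" "p = - Atrans a x + q"
  using assms unfolding circuit_polyhedron_def by blast

lemma inner_circuit_polyhedron_point: "w \<bullet> (- Atrans a x + q) = - Amap a w \<bullet> x + w \<bullet> q"
  unfolding inner_add_right inner_minus_right inner_minus_left inner_Atrans ..

lemma convex_circuit_polyhedron:
  assumes "convex X"
  shows "convex (circuit_polyhedron X a b)"
proof -
  have "circuit_polyhedron X a b = (\<Union>p\<in>(\<lambda>x. - Atrans a x) ` X. \<Union>q\<in>polar (Ncone b). {p + q})"
    unfolding circuit_polyhedron_def by blast
  then show ?thesis
    using convex_sums[OF convex_linear_image[OF linear_neg_Atrans assms] convex_polar] by simp
qed

lemma maximizers_circuit_polyhedron_iff:
  assumes x: "x \<in> X" and q: "q \<in> polar (Ncone b)"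
  shows "- Atrans a x + q \<in> maximizers (circuit_polyhedron X a b) w \<longleftrightarrow>
           x \<in> maximizers X (- Amap a w) \<and> q \<in> maximizers (polar (Ncone b)) w"
proof
  assume max: "- Atrans a x + q \<in> maximizers (circuit_polyhedron X a b) w"
  have "w \<bullet> (- Atrans a x' + q') \<le> w \<bullet> (- Atrans a x + q)"
    if "x' \<in> X" "q' \<in> polar (Ncone b)" for x' q'
    using max circuit_polyhedron_memI[OF that] unfolding maximizers_def by blast
  then have le: "- Amap a w \<bullet> x' + w \<bullet> q' \<le> - Amap a w \<bullet> x + w \<bullet> q"
    if "x' \<in> X" "q' \<in> polar (Ncone b)" for x' q'
    using that unfolding inner_circuit_polyhedron_point by blast
  have "- Amap a w \<bullet> x' \<le> - Amap a w \<bullet> x" if "x' \<in> X" for x'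
    using le[OF that q] by simp
  moreover have "w \<bullet> q' \<le> w \<bullet> q" if "q' \<in> polar (Ncone b)" for q'
    using le[OF x that] by simp
  ultimately show "x \<in> maximizers X (- Amap a w) \<and> q \<in> maximizers (polar (Ncone b)) w"
    using x q unfolding maximizers_def by blast
next
  assume "x \<in> maximizers X (- Amap a w) \<and> q \<in> maximizers (polar (Ncone b)) w"
  then have xmax: "\<And>x'. x' \<in> X \<Longrightarrow> - Amap a w \<bullet> x' \<le> - Amap a w \<bullet> x"
    and qmax: "\<And>q'. q' \<in> polar (Ncone b) \<Longrightarrow> w \<bullet> q' \<le> w \<bullet> q"
    unfolding maximizers_def by blast+
  have "w \<bullet> p \<le> w \<bullet> (- Atrans a x + q)" if p: "p \<in> circuit_polyhedron X a b" for p
  proof -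
    obtain x' q' where x'q': "x' \<in> X" "q' \<in> polar (Ncone b)" "p = - Atrans a x' + q'"
      using p by (rule circuit_polyhedron_memE)
    then have "w \<bullet> p = - Amap a w \<bullet> x' + w \<bullet> q'" by (simp only: inner_circuit_polyhedron_point)
    also have "\<dots> \<le> - Amap a w \<bullet> x + w \<bullet> q" using xmax qmax x'q' by (intro add_mono)
    also have "\<dots> = w \<bullet> (- Atrans a x + q)" by (simp only: inner_circuit_polyhedron_point)
    finally show ?thesis .
  qed
  moreover have "- Atrans a x + q \<in> circuit_polyhedron X a b"
    using x q by (rule circuit_polyhedron_memI)
  ultimately show "- Atrans a x + q \<in> maximizers (circuit_polyhedron X a b) w"
    unfolding maximizers_def by blast
qed

lemma maximizers_circuit_polyhedron:
  "maximizers (circuit_polyhedron X a b) w =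
     {- Atrans a x + q | x q. x \<in> maximizers X (- Amap a w) \<and> q \<in> maximizers (polar (Ncone b)) w}"
proof (intro equalityI subsetI)
  fix p assume p: "p \<in> maximizers (circuit_polyhedron X a b) w"
  then have "p \<in> circuit_polyhedron X a b" using maximizers_subset by blast
  then obtain x q where xq: "x \<in> X" "q \<in> polar (Ncone b)" "p = - Atrans a x + q"
    by (rule circuit_polyhedron_memE)
  then have "x \<in> maximizers X (- Amap a w) \<and> q \<in> maximizers (polar (Ncone b)) w"
    using p maximizers_circuit_polyhedron_iff[OF xq(1,2)] by simp
  then show "p \<in> {- Atrans a x + q | x q. x \<in> maximizers X (- Amap a w) \<and> q \<in> maximizers (polar (Ncone b)) w}"
    using xq(3) by blast
next
  fix p assume "p \<in> {- Atrans a x + q | x q. x \<in> maximizers X (- Amap a w) \<and> q \<in> maximizers (polar (Ncone b)) w}"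
  then obtain x q where xq: "x \<in> maximizers X (- Amap a w)" "q \<in> maximizers (polar (Ncone b)) w"
    and p: "p = - Atrans a x + q" by blast
  then have "x \<in> X" "q \<in> polar (Ncone b)" using maximizers_subset by blast+
  then show "p \<in> maximizers (circuit_polyhedron X a b) w"
    using maximizers_circuit_polyhedron_iff xq unfolding p by blast
qed

lemma supp_fun_circuit_polyhedron:
  assumes "w \<in> Ncone b"
  shows "supp_fun (circuit_polyhedron X a b) w = supp_fun X (- Amap a w)"
  unfolding supp_fun_def
proof (rule antisym)
  show "(SUP p\<in>circuit_polyhedron X a b. ereal (w \<bullet> p)) \<le> (SUP x\<in>X. ereal (- Amap a w \<bullet> x))"
  proof (rule SUP_least)
    fix p assume "p \<in> circuit_polyhedron X a b"
    then obtain x q where xq: "x \<in> X" "q \<in> polar (Ncone b)" "p = - Atrans a x + q"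
      by (rule circuit_polyhedron_memE)
    have "q \<bullet> w \<le> 0" using xq(2) assms unfolding polar_def by blast
    then have "w \<bullet> q \<le> 0" by (simp add: inner_commute)
    then have "w \<bullet> p \<le> - Amap a w \<bullet> x" unfolding xq(3) inner_circuit_polyhedron_point by simp
    then show "ereal (w \<bullet> p) \<le> (SUP x\<in>X. ereal (- Amap a w \<bullet> x))"
      by (intro SUP_upper2[OF xq(1)]) simp
  qed
  show "(SUP x\<in>X. ereal (- Amap a w \<bullet> x)) \<le> (SUP p\<in>circuit_polyhedron X a b. ereal (w \<bullet> p))"
  proof (rule SUP_least)
    fix x assume "x \<in> X"
    then have "- Atrans a x + 0 \<in> circuit_polyhedron X a b"
      using zero_in_polar by (rule circuit_polyhedron_memI)
    then have "ereal (w \<bullet> (- Atrans a x + 0)) \<le> (SUP p\<in>circuit_polyhedron X a b. ereal (w \<bullet> p))"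
      by (rule SUP_upper)
    then show "ereal (- Amap a w \<bullet> x) \<le> (SUP p\<in>circuit_polyhedron X a b. ereal (w \<bullet> p))"
      by (simp add: inner_Atrans)
  qed
qed

lemma supp_fun_circuit_polyhedron_outside:
  assumes "X \<noteq> {}" "w \<notin> Ncone b"
  shows "supp_fun (circuit_polyhedron X a b) w = \<infinity>"
proof -
  obtain q where q: "q \<in> polar (Ncone b)" "w \<bullet> q > 0"
    using notin_Ncone_polar_witness[OF assms(2)] by blast
  obtain x where "x \<in> X" using assms(1) by blast
  then have ray: "- Atrans a x + t *\<^sub>R q \<in> circuit_polyhedron X a b" if "0 \<le> t" for t
    using polar_scaleR[OF q(1) that] by (rule circuit_polyhedron_memI)
  show ?thesis
    by (rule supp_fun_unbounded_direction[OF _ ray q(2)]) (use ray[of 0] in simp)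
qed

section \<open>Circuits and rays of the normal fan\<close>

lemma proportional_scaleR: "proportional (s *\<^sub>R v) (t *\<^sub>R v)"
proof (cases "s = 0")
  case True
  then show ?thesis unfolding proportional_def by (auto intro: exI[of _ 0])
next
  case False
  then have "t *\<^sub>R v = (t / s) *\<^sub>R (s *\<^sub>R v)" by simp
  then show ?thesis unfolding proportional_def by blast
qed

lemma proportional_diff_add:
  fixes u v :: "'a::real_vector"
  assumes "proportional (u - v) (u + v)"
  obtains \<alpha> \<beta> where "\<alpha> *\<^sub>R u = \<beta> *\<^sub>R v" "\<alpha> \<noteq> 0 \<or> \<beta> \<noteq> 0"
  using assms unfolding proportional_def
proof (elim disjE exE)
  fix c assume h: "u - v = c *\<^sub>R (u + v)"
  have "(1 - c) *\<^sub>R u - (1 + c) *\<^sub>R v = (u - v) - c *\<^sub>R (u + v)" by (simp add: algebra_simps)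
  then have "(1 - c) *\<^sub>R u = (1 + c) *\<^sub>R v" using h by simp
  then show thesis by (rule that) arith
next
  fix c assume h: "u + v = c *\<^sub>R (u - v)"
  have "(1 - c) *\<^sub>R u - (- 1 - c) *\<^sub>R v = (u + v) - c *\<^sub>R (u - v)" by (simp add: algebra_simps)
  then have "(1 - c) *\<^sub>R u = (- 1 - c) *\<^sub>R v" using h by simp
  then show thesis by (rule that) arith
qed

lemma Ncone_dependent_ray:
  assumes \<nu>: "\<nu> \<in> Ncone b" "\<nu> \<noteq> 0" and w: "w \<in> Ncone b"
    and eq: "\<alpha> *\<^sub>R \<nu> = \<beta> *\<^sub>R w" and "\<beta> \<noteq> 0"
  obtains t where "0 \<le> t" "w = t *\<^sub>R \<nu>"
proof -
  have "w = (1 / \<beta>) *\<^sub>R (\<beta> *\<^sub>R w)" using \<open>\<beta> \<noteq> 0\<close> by simp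
  also have "\<dots> = (\<alpha> / \<beta>) *\<^sub>R \<nu>" unfolding eq[symmetric] by simp
  finally have w_eq: "w = (\<alpha> / \<beta>) *\<^sub>R \<nu>" .
  have "\<not> \<alpha> / \<beta> < 0" using Ncone_pointed[OF \<nu>(1)] w w_eq \<nu>(2) by metis
  then show ?thesis using that[of "\<alpha> / \<beta>"] w_eq by simp
qed

lemma circuit_if_ray:
  assumes \<nu>: "\<nu> \<in> Ncone b" "\<nu> \<noteq> 0" and F: "F face_of circuit_polyhedron X a b"
    and ray: "normal_cone_face (circuit_polyhedron X a b) F = {t *\<^sub>R \<nu> | t. 0 \<le> t}"
  shows "X_circuit X a b \<nu>"
proof -
  let ?P = "circuit_polyhedron X a b"
  have FP: "F \<subseteq> ?P" using F face_of_imp_subset by blast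
  have normal: "u \<in> normal_cone_face ?P F \<longleftrightarrow> F \<subseteq> maximizers ?P u" for u
    by (rule normal_cone_face_iff_maximizers[OF FP])
  have "F \<noteq> {}"
  proof
    assume "F = {}"
    then have "- \<nu> \<in> normal_cone_face ?P F" unfolding normal_cone_face_def by simp
    then obtain t where "0 \<le> t" "- \<nu> = t *\<^sub>R \<nu>" using ray by blast
    then have "(1 + t) *\<^sub>R \<nu> = 0" by (metis add.right_inverse scaleR_add_left scaleR_one)
    then show False using \<nu>(2) \<open>0 \<le> t\<close> by simp
  qed
  then obtain z where "z \<in> F" by blast
  have "\<nu> \<in> normal_cone_face ?P F" using ray by (auto intro: exI[of _ 1])
  then have F\<nu>: "F \<subseteq> maximizers ?P \<nu>" using normal by blast
  then have "supp_fun ?P \<nu> = ereal (\<nu> \<bullet> z)" using \<open>z \<in> F\<close> maximizers_iff_supp_fun by blast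
  then have "supp_fun X (- Amap a \<nu>) = ereal (\<nu> \<bullet> z)"
    using supp_fun_circuit_polyhedron[OF \<nu>(1), of X a] by simp
  then have finite: "supp_fun X (- Amap a \<nu>) < \<infinity>" by simp
  have "proportional \<nu>1 \<nu>2"
    if \<nu>12: "\<nu>1 \<in> Ncone b" "\<nu>2 \<in> Ncone b" and t: "t \<in> {0<..<1}"
      and eq: "\<nu> = (1 - t) *\<^sub>R \<nu>1 + t *\<^sub>R \<nu>2"
      and aff: "affine_on_segment (\<lambda>\<mu>. supp_fun X (- Amap a \<mu>)) \<nu>1 \<nu>2" for \<nu>1 \<nu>2 t
  proof -
    obtain c d where cd: "\<And>s. s \<in> {0..1} \<Longrightarrow>
        supp_fun X (- Amap a ((1 - s) *\<^sub>R \<nu>1 + s *\<^sub>R \<nu>2)) = ereal (c + s * d)"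
      using aff unfolding affine_on_segment_def by blast
    have "supp_fun ?P ((1 - s) *\<^sub>R \<nu>1 + s *\<^sub>R \<nu>2) = ereal (c + s * d)" if s: "s \<in> {0..1}" for s
    proof -
      have "(1 - s) *\<^sub>R \<nu>1 + s *\<^sub>R \<nu>2 \<in> Ncone b"
        using s \<nu>12 by (auto intro!: Ncone_add Ncone_scaleR)
      then show ?thesis using cd[OF s] by (subst supp_fun_circuit_polyhedron)
    qed
    then have "affine_on_segment (supp_fun ?P) \<nu>1 \<nu>2"
      unfolding affine_on_segment_def by blast
    then have "F \<subseteq> maximizers ?P \<nu>1" "F \<subseteq> maximizers ?P \<nu>2"
      using maximizers_affine_segment[OF _ t] F\<nu> unfolding eq by blast+
    then obtain t1 t2 where "\<nu>1 = t1 *\<^sub>R \<nu>" "\<nu>2 = t2 *\<^sub>R \<nu>" using normal ray by blast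
    then show ?thesis using proportional_scaleR by simp
  qed
  then show ?thesis unfolding X_circuit_def using \<nu> finite by blast
qed

lemma circuit_perturbation_ray:
  assumes circ: "X_circuit X a b \<nu>" and w: "w \<in> Ncone b" and "0 < \<epsilon>"
    and \<nu>1: "\<nu> - \<epsilon> *\<^sub>R w \<in> Ncone b"
    and aff: "affine_on_segment (\<lambda>\<mu>. supp_fun X (- Amap a \<mu>)) (\<nu> - \<epsilon> *\<^sub>R w) (\<nu> + \<epsilon> *\<^sub>R w)"
  obtains t where "0 \<le> t" "w = t *\<^sub>R \<nu>"
proof -
  have \<nu>: "\<nu> \<in> Ncone b" "\<nu> \<noteq> 0" using circ unfolding X_circuit_def by blast+
  have \<nu>2: "\<nu> + \<epsilon> *\<^sub>R w \<in> Ncone b" using \<nu>(1) w \<open>0 < \<epsilon>\<close> by (simp add: Ncone_add Ncone_scaleR)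
  have half: "(1 / 2 :: real) \<in> {0<..<1}" by simp
  have mid: "\<nu> = (1 - 1 / 2) *\<^sub>R (\<nu> - \<epsilon> *\<^sub>R w) + (1 / 2) *\<^sub>R (\<nu> + \<epsilon> *\<^sub>R w)"
    by (simp add: vec_eq_iff algebra_simps)
  have "proportional (\<nu> - \<epsilon> *\<^sub>R w) (\<nu> + \<epsilon> *\<^sub>R w)"
  proof (rule ccontr)
    assume "\<not> proportional (\<nu> - \<epsilon> *\<^sub>R w) (\<nu> + \<epsilon> *\<^sub>R w)"
    with \<nu>1 \<nu>2 half mid aff have "\<exists>\<nu>1\<in>Ncone b. \<exists>\<nu>2\<in>Ncone b. \<exists>t\<in>{0<..<1}.
        \<not> proportional \<nu>1 \<nu>2 \<and> \<nu> = (1 - t) *\<^sub>R \<nu>1 + t *\<^sub>R \<nu>2 \<and>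
        affine_on_segment (\<lambda>\<mu>. supp_fun X (- Amap a \<mu>)) \<nu>1 \<nu>2"
      by blast
    then show False using circ unfolding X_circuit_def by blast
  qed
  then obtain \<alpha> \<beta> where eq: "\<alpha> *\<^sub>R \<nu> = \<beta> *\<^sub>R (\<epsilon> *\<^sub>R w)" and "\<alpha> \<noteq> 0 \<or> \<beta> \<noteq> 0"
    by (rule proportional_diff_add)
  then have "\<beta> * \<epsilon> \<noteq> 0" using \<nu>(2) \<open>0 < \<epsilon>\<close> by auto
  moreover have "\<alpha> *\<^sub>R \<nu> = (\<beta> * \<epsilon>) *\<^sub>R w" using eq by simp
  ultimately obtain t where "0 \<le> t" "w = t *\<^sub>R \<nu>"
    using Ncone_dependent_ray[OF \<nu> w] by blast
  then show ?thesis by (rule that)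
qed

text \<open>The support function is affine on the segment because the single point z maximizes along it.\<close>
lemma circuit_affine_perturbation:
  assumes X: "polyhedron X" and \<nu>: "\<nu> \<in> Ncone b" and w: "w \<in> Ncone b"
    and zy: "z \<in> maximizers X (- Amap a \<nu>)" and zd: "z \<in> maximizers X (- Amap a w)"
    and yd: "\<And>x. x \<in> maximizers X (- Amap a \<nu>) \<Longrightarrow> x \<in> maximizers X (- Amap a w)"
    and supp: "\<And>i. i \<noteq> b \<Longrightarrow> \<nu> $ i = 0 \<Longrightarrow> w $ i = 0"
  obtains \<epsilon> where "0 < \<epsilon>" "\<nu> - \<epsilon> *\<^sub>R w \<in> Ncone b"
    "affine_on_segment (\<lambda>\<mu>. supp_fun X (- Amap a \<mu>)) (\<nu> - \<epsilon> *\<^sub>R w) (\<nu> + \<epsilon> *\<^sub>R w)"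
proof -
  define y d where "y = - Amap a \<nu>" and "d = - Amap a w"
  have zy': "z \<in> maximizers X y" and zd': "z \<in> maximizers X d"
    using zy zd unfolding y_def d_def .
  have "d \<bullet> z \<le> d \<bullet> x" if x: "x \<in> maximizers X y" for x
  proof -
    have "x \<in> maximizers X d" using yd x unfolding y_def d_def .
    moreover have "z \<in> X" using zy' maximizers_subset by blast
    ultimately show ?thesis unfolding maximizers_def by blast
  qed
  then have "\<forall>\<^sub>F \<epsilon> in at_right 0. z \<in> maximizers X (y - \<epsilon> *\<^sub>R d)"
    by (rule polyhedron_eventually_maximizer[OF X zy'])
  moreover have "\<forall>\<^sub>F \<epsilon> in at_right 0. \<nu> - \<epsilon> *\<^sub>R w \<in> Ncone b"
    by (rule eventually_Ncone_diff[OF \<nu> w supp])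
  moreover have "\<forall>\<^sub>F \<epsilon> in at_right 0. (0::real) < \<epsilon>" by (rule eventually_at_right_less)
  ultimately have "\<forall>\<^sub>F \<epsilon> in at_right 0. z \<in> maximizers X (y - \<epsilon> *\<^sub>R d) \<and> \<nu> - \<epsilon> *\<^sub>R w \<in> Ncone b \<and> 0 < \<epsilon>"
    by (intro eventually_conj)
  then have "\<exists>\<epsilon>. z \<in> maximizers X (y - \<epsilon> *\<^sub>R d) \<and> \<nu> - \<epsilon> *\<^sub>R w \<in> Ncone b \<and> 0 < \<epsilon>"
    by (rule eventually_happens'[rotated]) simp
  then obtain \<epsilon> where \<epsilon>: "0 < \<epsilon>" "z \<in> maximizers X (y - \<epsilon> *\<^sub>R d)" "\<nu> - \<epsilon> *\<^sub>R w \<in> Ncone b"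
    by blast
  have "z \<in> maximizers X (- Amap a ((1 - s) *\<^sub>R (\<nu> - \<epsilon> *\<^sub>R w) + s *\<^sub>R (\<nu> + \<epsilon> *\<^sub>R w)))"
    if "s \<in> {0..1}" for s
  proof -
    have "(1 - s) *\<^sub>R (\<nu> - \<epsilon> *\<^sub>R w) + s *\<^sub>R (\<nu> + \<epsilon> *\<^sub>R w) = \<nu> + ((2 * s - 1) * \<epsilon>) *\<^sub>R w"
      by (simp add: vec_eq_iff algebra_simps)
    then have "- Amap a ((1 - s) *\<^sub>R (\<nu> - \<epsilon> *\<^sub>R w) + s *\<^sub>R (\<nu> + \<epsilon> *\<^sub>R w)) = y + ((2 * s - 1) * \<epsilon>) *\<^sub>R d"
      unfolding y_def d_def by (simp add: linear_add[OF linear_Amap] linear_scale[OF linear_Amap])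
    moreover have "0 \<le> 2 * s * \<epsilon>" using that \<open>0 < \<epsilon>\<close> by simp
    then have "- \<epsilon> \<le> (2 * s - 1) * \<epsilon>" by (simp add: algebra_simps)
    ultimately show ?thesis
      using maximizers_perturbation_interval[OF zy' zd' \<epsilon>(2,1)] by simp
  qed
  then have "affine_on_segment (\<lambda>\<mu>. supp_fun X (- Amap a \<mu>)) (\<nu> - \<epsilon> *\<^sub>R w) (\<nu> + \<epsilon> *\<^sub>R w)"
    by (rule affine_on_segment_supp_fun_linear[OF linear_neg_Amap])
  then show ?thesis using that \<epsilon>(1,3) by blast
qed

lemma normal_cone_circuit_subset_ray:
  assumes X: "polyhedron X" and circ: "X_circuit X a b \<nu>"
    and z: "z \<in> maximizers X (- Amap a \<nu>)"
    and sub: "maximizers (circuit_polyhedron X a b) \<nu> \<subseteq> maximizers (circuit_polyhedron X a b) w"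
  obtains t where "0 \<le> t" "w = t *\<^sub>R \<nu>"
proof -
  let ?P = "circuit_polyhedron X a b" and ?Q = "polar (Ncone b)"
  have \<nu>: "\<nu> \<in> Ncone b" using circ unfolding X_circuit_def by blast
  have transfer: "x \<in> maximizers X (- Amap a w) \<and> q \<in> maximizers ?Q w"
    if xq: "x \<in> maximizers X (- Amap a \<nu>)" "q \<in> maximizers ?Q \<nu>" for x q
  proof -
    have "x \<in> X" "q \<in> ?Q" using xq maximizers_subset by blast+
    note iff = maximizers_circuit_polyhedron_iff[OF this]
    have "- Atrans a x + q \<in> maximizers ?P \<nu>" using iff[THEN iffD2] xq by blast
    then have "- Atrans a x + q \<in> maximizers ?P w" using sub by blast
    then show ?thesis by (rule iff[THEN iffD1])
  qed
  have "0 \<in> maximizers ?Q \<nu>" using maximizers_polar_Ncone[OF \<nu>] zero_in_polar by simp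
  note z0 = transfer[OF _ this]
  have zw: "z \<in> maximizers X (- Amap a w)" using z0[OF z] by blast
  have wN: "w \<in> Ncone b"
  proof (rule ccontr)
    assume "w \<notin> Ncone b"
    moreover have "z \<in> X" using z maximizers_subset by blast
    ultimately have "supp_fun ?P w = \<infinity>" by (intro supp_fun_circuit_polyhedron_outside) blast+
    moreover have "- Atrans a z + 0 \<in> maximizers ?P w"
      using maximizers_circuit_polyhedron_iff[OF \<open>z \<in> X\<close> zero_in_polar, THEN iffD2] z0[OF z] by blast
    ultimately show False unfolding maximizers_iff_supp_fun by simp
  qed
  have supp: "w $ i = 0" if i: "i \<noteq> b" "\<nu> $ i = 0" for i
  proof -
    have "- axis i 1 \<in> maximizers ?Q \<nu>"
      using maximizers_polar_Ncone[OF \<nu>] neg_axis_in_polar_Ncone[OF i(1)] i(2) by (simp add: inner_axis)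
    then have "- axis i 1 \<in> maximizers ?Q w" using transfer[OF z] by blast
    then show ?thesis using maximizers_polar_Ncone[OF wN] by (simp add: inner_axis)
  qed
  have "x \<in> maximizers X (- Amap a w)" if "x \<in> maximizers X (- Amap a \<nu>)" for x
    using z0[OF that] by blast
  then obtain \<epsilon> where "0 < \<epsilon>" "\<nu> - \<epsilon> *\<^sub>R w \<in> Ncone b"
    "affine_on_segment (\<lambda>\<mu>. supp_fun X (- Amap a \<mu>)) (\<nu> - \<epsilon> *\<^sub>R w) (\<nu> + \<epsilon> *\<^sub>R w)"
    by (rule circuit_affine_perturbation[OF X \<nu> wN z zw _ supp])
  then obtain t where "0 \<le> t" "w = t *\<^sub>R \<nu>" by (rule circuit_perturbation_ray[OF circ wN])
  then show ?thesis by (rule that)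
qed

lemma normal_cone_maximizers_circuit:
  assumes X: "polyhedron X" "X \<noteq> {}" and circ: "X_circuit X a b \<nu>"
  shows "normal_cone_face (circuit_polyhedron X a b) (maximizers (circuit_polyhedron X a b) \<nu>) =
           {t *\<^sub>R \<nu> | t. 0 \<le> t}"
proof -
  let ?P = "circuit_polyhedron X a b"
  have "supp_fun X (- Amap a \<nu>) < \<infinity>" using circ unfolding X_circuit_def by blast
  then obtain m where "\<forall>x\<in>X. - Amap a \<nu> \<bullet> x \<le> m"
    using supp_fun_finite_imp_bounded[OF X(2)] by blast
  then obtain z where z: "z \<in> maximizers X (- Amap a \<nu>)"
    by (rule polyhedron_maximizer_exists[OF X])
  have normal: "w \<in> normal_cone_face ?P (maximizers ?P \<nu>) \<longleftrightarrow> maximizers ?P \<nu> \<subseteq> maximizers ?P w" for w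
    by (rule normal_cone_face_iff_maximizers[OF maximizers_subset])
  show ?thesis
  proof (intro equalityI subsetI)
    fix w assume "w \<in> normal_cone_face ?P (maximizers ?P \<nu>)"
    then have "maximizers ?P \<nu> \<subseteq> maximizers ?P w" using normal by blast
    then obtain t where "0 \<le> t" "w = t *\<^sub>R \<nu>"
      by (rule normal_cone_circuit_subset_ray[OF X(1) circ z])
    then show "w \<in> {t *\<^sub>R \<nu> | t. 0 \<le> t}" by blast
  next
    fix w assume "w \<in> {t *\<^sub>R \<nu> | t. 0 \<le> t}"
    then obtain t where "0 \<le> t" "w = t *\<^sub>R \<nu>" by blast
    then have "maximizers ?P \<nu> \<subseteq> maximizers ?P w" using maximizers_scaleR by blast
    then show "w \<in> normal_cone_face ?P (maximizers ?P \<nu>)" using normal by blast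
  qed
qed

lemma X_circuit_iff_ray_in_outer_normal_fan:
  assumes X: "polyhedron X" "X \<noteq> {}" and \<nu>: "\<nu> \<in> Ncone b" "\<nu> \<noteq> 0"
  shows "X_circuit X a b \<nu> \<longleftrightarrow> {t *\<^sub>R \<nu> | t. 0 \<le> t} \<in> outer_normal_fan (circuit_polyhedron X a b)"
proof
  assume circ: "X_circuit X a b \<nu>"
  have "maximizers (circuit_polyhedron X a b) \<nu> face_of circuit_polyhedron X a b"
    by (intro maximizers_face_of convex_circuit_polyhedron polyhedron_imp_convex X(1))
  then show "{t *\<^sub>R \<nu> | t. 0 \<le> t} \<in> outer_normal_fan (circuit_polyhedron X a b)"
    unfolding outer_normal_fan_def using normal_cone_maximizers_circuit[OF X circ] by blast
next
  assume "{t *\<^sub>R \<nu> | t. 0 \<le> t} \<in> outer_normal_fan (circuit_polyhedron X a b)"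
  then obtain F where "F face_of circuit_polyhedron X a b"
    "normal_cone_face (circuit_polyhedron X a b) F = {t *\<^sub>R \<nu> | t. 0 \<le> t}"
    unfolding outer_normal_fan_def by auto
  then show "X_circuit X a b \<nu>" by (rule circuit_if_ray[OF \<nu>])
qed

text \<open>A normalized circuit is determined by the normal cone of its face of P, and these faces are
  sums of faces of X and of the polar cone.\<close>
lemma finite_normalized_X_circuits:
  assumes X: "polyhedron X" "X \<noteq> {}"
  shows "finite {l. X_circuit X a b l \<and> l $ b = -1}"
proof -
  let ?P = "circuit_polyhedron X a b" and ?Q = "polar (Ncone b)"
  let ?S = "{l. X_circuit X a b l \<and> l $ b = -1}"
  let ?faces = "{G. G face_of X} \<times> {H. H face_of ?Q}"
  let ?sum = "\<lambda>(G, H). {- Atrans a x + q | x q. x \<in> G \<and> q \<in> H}"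
  have inj: "inj_on (maximizers ?P) ?S"
  proof (rule inj_onI)
    fix l l' assume l: "l \<in> ?S" and l': "l' \<in> ?S" and eq: "maximizers ?P l = maximizers ?P l'"
    have "X_circuit X a b l" "X_circuit X a b l'" using l l' by blast+
    note ray = normal_cone_maximizers_circuit[OF X this(1)] normal_cone_maximizers_circuit[OF X this(2)]
    have "{t *\<^sub>R l | t. 0 \<le> t} = normal_cone_face ?P (maximizers ?P l)" using ray(1) ..
    also have "\<dots> = {t *\<^sub>R l' | t. 0 \<le> t}" unfolding eq by (rule ray(2))
    finally have "{t *\<^sub>R l | t. 0 \<le> t} = {t *\<^sub>R l' | t. 0 \<le> t}" .
    moreover have "l' \<in> {t *\<^sub>R l' | t. 0 \<le> t}" by (auto intro: exI[of _ 1])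
    ultimately obtain t where t: "l' = t *\<^sub>R l" by blast
    then have "t = 1" using l l' by simp
    then show "l = l'" using t by simp
  qed
  have sub: "maximizers ?P ` ?S \<subseteq> ?sum ` ?faces"
  proof
    fix F assume "F \<in> maximizers ?P ` ?S"
    then obtain l where "F = maximizers ?P l" by blast
    then have "F = ?sum (maximizers X (- Amap a l), maximizers ?Q l)"
      using maximizers_circuit_polyhedron by simp
    moreover have "maximizers X (- Amap a l) face_of X" "maximizers ?Q l face_of ?Q"
      by (intro maximizers_face_of polyhedron_imp_convex X(1) convex_polar)+
    ultimately show "F \<in> ?sum ` ?faces" by blast
  qed
  have "finite ?faces"
    using finite_polyhedron_faces[OF X(1)] finite_polyhedron_faces[OF polyhedron_polar_Ncone] by blast
  then show ?thesis using inj_on_finite[OF inj sub] by blast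
qed

theorem theorem3p7:
  fixes X :: "(real^'n) set" and a :: "'m::finite \<Rightarrow> real^'n" and b :: 'm
  assumes "polyhedron X" and "X \<noteq> {}" and "inj a"
  defines "P \<equiv> {p + q | p q. p \<in> (\<lambda>x. - Atrans a x) ` X \<and> q \<in> polar (Ncone b)}"
  shows "(\<forall>\<nu> \<in> Ncone b - {0}.
            X_circuit X a b \<nu> \<longleftrightarrow> {t *\<^sub>R \<nu> | t. 0 \<le> t} \<in> outer_normal_fan P)
         \<and> finite {l. X_circuit X a b l \<and> l $ b = -1}"
proof -
  have "P = circuit_polyhedron X a b" unfolding P_def circuit_polyhedron_def ..
  then show ?thesis
    using X_circuit_iff_ray_in_outer_normal_fan[OF assms(1,2)] finite_normalized_X_circuits[OF assms(1,2)]
    by blast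
qed

end
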